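(* Let $\mathbb{F}$ be a finite field. For every $k\in\mathbb{N}$ there exists a CMSO formula $\mathrm{LinCom}(\langle Z\rangle,\langle Y^1\rangle,\dots,\langle Y^k\rangle)$ over $\Sigma_{\mathbb{F}}$ such that for every matrix $A$ over $\mathbb{F}$ and all virtual columns $\langle L\rangle,\langle J^1\rangle,\dots,\langle J^k\rangle$ of $\mathcal{S}(A)$ we have $\mathcal{S}(A)\models\mathrm{LinCom}(\langle L\rangle,\langle J^1\rangle,\dots,\langle J^k\rangle)$ if and only if $v(\langle L\rangle)\in\mathrm{span}(v(\langle J^1\rangle),\dots,v(\langle J^k\rangle))$.
   Context: $\Sigma_{\mathbb{F}}$ has unary symbols $R,C$ and binary symbols $\mathrm{Entry}_\alpha$ ($\alpha\in\mathbb{F}$). For a matrix $A$ with rows $r_1,\dots,r_m$, $\mathcal{S}(A)$ has universe rows $\cup$ columns, $R$ = rows, $C$ = columns, $\mathrm{Entry}_\alpha=\{(r,c):A(r,c)=\alpha\}$. CMSO is monadic second-order logic with predicates $\mathrm{mod}_{a,b}(X)$ meaning $|X|\equiv a\pmod b$. A virtual column of $\mathcal{S}(A)$ is a family $\langle Q\rangle=\{Q_\alpha\}_{\alpha\in\mathbb{F}}$ of pairwise disjoint sets of rows whose union is the set of all rows; its vector $v(\langle Q\rangle)\in\mathbb{F}^m$ has $i$-th coordinate $\alpha$ where $r_i\in Q_\alpha$. In formulas, a virtual column variable $\langle Z\rangle$ is an $\mathbb{F}$-indexed tuple of set variables $\{Z_\alpha\}_{\alpha\in\mathbb{F}}$.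 *)

theory Defs
  imports Main
begin

record ('u,'f) sigF_struct =
  univ :: "'u set"
  predR :: "'u \<Rightarrow> bool"
  predC :: "'u \<Rightarrow> bool"
  entry :: "'f \<Rightarrow> 'u \<Rightarrow> 'u \<Rightarrow> bool"

text \<open>The structure S(A) of an m x n matrix A (entries A i j for i < m, j < n).
  Row r_(i+1) is Inl i, column c_(j+1) is Inr j.\<close>
definition matrix_struct :: "nat \<Rightarrow> nat \<Rightarrow> (nat \<Rightarrow> nat \<Rightarrow> 'f) \<Rightarrow> (nat + nat, 'f) sigF_struct" where
  "matrix_struct m n A =
     \<lparr> univ = Inl ` {..<m} \<union> Inr ` {..<n},
       predR = (\<lambda>x. x \<in> Inl ` {..<m}),
       predC = (\<lambda>x. x \<in> Inr ` {..<n}),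
       entry = (\<lambda>\<alpha> x y. \<exists>i j. i < m \<and> j < n \<and> x = Inl i \<and> y = Inr j \<and> A i j = \<alpha>) \<rparr>"

datatype ('f,'s) cmso =
    AtR nat
  | AtC nat
  | AtEntry 'f nat nat
  | AtEq nat nat
  | AtMem nat 's
  | AtMod nat nat 's
  | Neg "('f,'s) cmso"
  | Conj "('f,'s) cmso" "('f,'s) cmso"
  | Disj "('f,'s) cmso" "('f,'s) cmso"
  | ExFO nat "('f,'s) cmso"
  | AllFO nat "('f,'s) cmso"
  | ExSO 's "('f,'s) cmso"
  | AllSO 's "('f,'s) cmso"

fun sat :: "('u,'f) sigF_struct \<Rightarrow> (nat \<Rightarrow> 'u) \<Rightarrow> ('s \<Rightarrow> 'u set) \<Rightarrow> ('f,'s) cmso \<Rightarrow> bool" where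
  "sat S \<nu> \<sigma> (AtR x) = predR S (\<nu> x)"
| "sat S \<nu> \<sigma> (AtC x) = predC S (\<nu> x)"
| "sat S \<nu> \<sigma> (AtEntry \<alpha> x y) = entry S \<alpha> (\<nu> x) (\<nu> y)"
| "sat S \<nu> \<sigma> (AtEq x y) = (\<nu> x = \<nu> y)"
| "sat S \<nu> \<sigma> (AtMem x X) = (\<nu> x \<in> \<sigma> X)"
| "sat S \<nu> \<sigma> (AtMod a b X) = (card (\<sigma> X) mod b = a mod b)"
| "sat S \<nu> \<sigma> (Neg \<phi>) = (\<not> sat S \<nu> \<sigma> \<phi>)"
| "sat S \<nu> \<sigma> (Conj \<phi> \<psi>) = (sat S \<nu> \<sigma> \<phi> \<and> sat S \<nu> \<sigma> \<psi>)"
| "sat S \<nu> \<sigma> (Disj \<phi> \<psi>) = (sat S \<nu> \<sigma> \<phi> \<or> sat S \<nu> \<sigma> \<psi>)"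
| "sat S \<nu> \<sigma> (ExFO x \<phi>) = (\<exists>a\<in>univ S. sat S (\<nu>(x := a)) \<sigma> \<phi>)"
| "sat S \<nu> \<sigma> (AllFO x \<phi>) = (\<forall>a\<in>univ S. sat S (\<nu>(x := a)) \<sigma> \<phi>)"
| "sat S \<nu> \<sigma> (ExSO X \<phi>) = (\<exists>B\<subseteq>univ S. sat S \<nu> (\<sigma>(X := B)) \<phi>)"
| "sat S \<nu> \<sigma> (AllSO X \<phi>) = (\<forall>B\<subseteq>univ S. sat S \<nu> (\<sigma>(X := B)) \<phi>)"

definition virtual_column :: "nat \<Rightarrow> ('f \<Rightarrow> (nat + nat) set) \<Rightarrow> bool" where
  "virtual_column m Q \<longleftrightarrow>
     (\<forall>\<alpha> \<beta>. \<alpha> \<noteq> \<beta> \<longrightarrow> Q \<alpha> \<inter> Q \<beta> = {}) \<and> (\<Union>\<alpha>. Q \<alpha>) = Inl ` {..<m}"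

definition vc_vec :: "('f \<Rightarrow> (nat + nat) set) \<Rightarrow> nat \<Rightarrow> 'f" where
  "vc_vec Q i = (THE \<alpha>. Inl i \<in> Q \<alpha>)"

definition in_span :: "nat \<Rightarrow> (nat \<Rightarrow> 'f::field) \<Rightarrow> nat \<Rightarrow> (nat \<Rightarrow> nat \<Rightarrow> 'f) \<Rightarrow> bool" where
  "in_span m v k vs \<longleftrightarrow> (\<exists>c :: nat \<Rightarrow> 'f. \<forall>i<m. v i = (\<Sum>j\<in>{1..k}. c j * vs j i))"

end

theory Submission
  imports Defs
begin

text \<open>For a fixed coefficient tuple c, the statement v(L) = \<Sum>j c_j v(J^j) is first-order
  expressible: for every row x and every tuple a with x \<in> J^j_(a_j) for all j, the row x must
  lie in L_(\<Sum>j c_j a_j). Since a row of a virtual column has exactly one value, the only tuple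
  a matching row x is its coordinate tuple, so this says precisely that the coordinates agree.
  The field is finite, so LinCom is the finite disjunction of these formulas over all c.\<close>

definition cmso_true :: "('f,'s) cmso" where
  "cmso_true = AtEq 0 0"

fun Conjs :: "('f,'s) cmso list \<Rightarrow> ('f,'s) cmso" where
  "Conjs [] = cmso_true"
| "Conjs (\<phi> # \<phi>s) = Conj \<phi> (Conjs \<phi>s)"

fun Disjs :: "('f,'s) cmso list \<Rightarrow> ('f,'s) cmso" where
  "Disjs [] = Neg cmso_true"
| "Disjs (\<phi> # \<phi>s) = Disj \<phi> (Disjs \<phi>s)"

definition Imp :: "('f,'s) cmso \<Rightarrow> ('f,'s) cmso \<Rightarrow> ('f,'s) cmso" where
  "Imp \<phi> \<psi> = Disj (Neg \<phi>) \<psi>"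

lemma sat_cmso_true [simp]: "sat S \<nu> \<sigma> cmso_true"
  by (simp add: cmso_true_def)

lemma sat_Conjs [simp]: "sat S \<nu> \<sigma> (Conjs \<phi>s) \<longleftrightarrow> (\<forall>\<phi>\<in>set \<phi>s. sat S \<nu> \<sigma> \<phi>)"
  by (induction \<phi>s) auto

lemma sat_Disjs [simp]: "sat S \<nu> \<sigma> (Disjs \<phi>s) \<longleftrightarrow> (\<exists>\<phi>\<in>set \<phi>s. sat S \<nu> \<sigma> \<phi>)"
  by (induction \<phi>s) auto

lemma sat_Imp [simp]: "sat S \<nu> \<sigma> (Imp \<phi> \<psi>) \<longleftrightarrow> (sat S \<nu> \<sigma> \<phi> \<longrightarrow> sat S \<nu> \<sigma> \<psi>)"
  by (simp add: Imp_def)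

definition finite_universe_list :: "'a::finite list" where
  "finite_universe_list = (SOME xs. set xs = UNIV)"

lemma set_finite_universe_list [simp]: "set (finite_universe_list :: 'a::finite list) = UNIV"
  unfolding finite_universe_list_def by (rule someI_ex) (rule finite_list[OF finite_UNIV])

lemma virtual_column_mem_iff:
  assumes "virtual_column m Q" and "i < m"
  shows "Inl i \<in> Q \<alpha> \<longleftrightarrow> vc_vec Q i = \<alpha>"
proof -
  obtain \<beta> where \<beta>: "Inl i \<in> Q \<beta>"
    using assms unfolding virtual_column_def by blast
  have unique: "\<gamma> = \<beta>" if "Inl i \<in> Q \<gamma>" for \<gamma>
    using assms(1) \<beta> that unfolding virtual_column_def by blast
  have "vc_vec Q i = \<beta>"
    unfolding vc_vec_def using \<beta> unique by (rule the_equality)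
  then show ?thesis
    using \<beta> unique by blast
qed

lemma in_span_iff_coefficient_list:
  "in_span m v k vs \<longleftrightarrow>
     (\<exists>cs. length cs = k \<and> (\<forall>i<m. v i = (\<Sum>j\<in>{1..k}. cs ! (j - 1) * vs j i)))"
proof
  assume "in_span m v k vs"
  then obtain c where c: "\<forall>i<m. v i = (\<Sum>j\<in>{1..k}. c j * vs j i)"
    unfolding in_span_def by blast
  define cs where "cs = map (\<lambda>j. c (Suc j)) [0..<k]"
  have "cs ! (j - 1) = c j" if "j \<in> {1..k}" for j
    using that by (auto simp: cs_def)
  then have "\<forall>i<m. v i = (\<Sum>j\<in>{1..k}. cs ! (j - 1) * vs j i)"
    using c by simp
  moreover have "length cs = k"
    by (simp add: cs_def)
  ultimately show "\<exists>cs. length cs = k \<and> (\<forall>i<m. v i = (\<Sum>j\<in>{1..k}. cs ! (j - 1) * vs j i))"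
    by blast
qed (auto simp: in_span_def)

text \<open>First-order variable 0 ranges over rows; the set variable (0, \<alpha>) stands for L_\<alpha> and
  (j, \<alpha>) for J^j_\<alpha>. Tuples a and c are lists, with a_j stored at position j - 1.\<close>

definition row_in_pattern :: "nat \<Rightarrow> 'f list \<Rightarrow> ('f, nat \<times> 'f) cmso" where
  "row_in_pattern k as = Conjs [AtMem 0 (j, as ! (j - 1)). j \<leftarrow> [1..<Suc k]]"

definition combination_formula :: "nat \<Rightarrow> 'f list \<Rightarrow> ('f::{finite,field}, nat \<times> 'f) cmso" where
  "combination_formula k cs = AllFO 0 (Conjs
     [Imp (Conj (AtR 0) (row_in_pattern k as))
          (AtMem 0 (0, \<Sum>j\<in>{1..k}. cs ! (j - 1) * as ! (j - 1))).
      as \<leftarrow> List.n_lists k finite_universe_list])"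

definition LinCom :: "nat \<Rightarrow> ('f::{finite,field}, nat \<times> 'f) cmso" where
  "LinCom k = Disjs (map (combination_formula k) (List.n_lists k finite_universe_list))"

lemma sat_row_in_pattern:
  "sat S \<nu> \<sigma> (row_in_pattern k as) \<longleftrightarrow> (\<forall>j\<in>{1..k}. \<nu> 0 \<in> \<sigma> (j, as ! (j - 1)))"
  by (auto simp: row_in_pattern_def)

lemma sat_combination_formula_matrix_struct:
  "sat (matrix_struct m n A) \<nu> \<sigma> (combination_formula k cs) \<longleftrightarrow>
     (\<forall>i<m. \<forall>as. length as = k \<longrightarrow> (\<forall>j\<in>{1..k}. Inl i \<in> \<sigma> (j, as ! (j - 1))) \<longrightarrow>
        Inl i \<in> \<sigma> (0, \<Sum>j\<in>{1..k}. cs ! (j - 1) * as ! (j - 1)))"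
  by (auto simp: combination_formula_def sat_row_in_pattern set_n_lists matrix_struct_def)

lemma row_condition_iff_coordinates:
  assumes L: "virtual_column m L" and J: "\<forall>j\<in>{1..k}. virtual_column m (J j)" and "i < m"
  shows "(\<forall>as. length as = k \<longrightarrow> (\<forall>j\<in>{1..k}. Inl i \<in> J j (as ! (j - 1))) \<longrightarrow>
            Inl i \<in> L (\<Sum>j\<in>{1..k}. c j * as ! (j - 1)))
         \<longleftrightarrow> vc_vec L i = (\<Sum>j\<in>{1..k}. c j * vc_vec (J j) i)"
proof -
  have J_iff: "Inl i \<in> J j \<alpha> \<longleftrightarrow> vc_vec (J j) i = \<alpha>" if "j \<in> {1..k}" for j \<alpha>
    by (rule virtual_column_mem_iff[OF bspec[OF J that] \<open>i < m\<close>])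
  have L_iff: "Inl i \<in> L \<alpha> \<longleftrightarrow> vc_vec L i = \<alpha>" for \<alpha>
    by (rule virtual_column_mem_iff[OF L \<open>i < m\<close>])
  define coords where "coords = map (\<lambda>j. vc_vec (J (Suc j)) i) [0..<k]"
  have coords: "coords ! (j - 1) = vc_vec (J j) i" if "j \<in> {1..k}" for j
    using that by (auto simp: coords_def)
  show ?thesis
  proof
    assume row: "\<forall>as. length as = k \<longrightarrow> (\<forall>j\<in>{1..k}. Inl i \<in> J j (as ! (j - 1))) \<longrightarrow>
                   Inl i \<in> L (\<Sum>j\<in>{1..k}. c j * as ! (j - 1))"
    have "length coords = k"
      by (simp add: coords_def)
    moreover have "\<forall>j\<in>{1..k}. Inl i \<in> J j (coords ! (j - 1))"
      using J_iff coords by (intro ballI) simp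
    ultimately have "Inl i \<in> L (\<Sum>j\<in>{1..k}. c j * coords ! (j - 1))"
      using row by blast
    also have "(\<Sum>j\<in>{1..k}. c j * coords ! (j - 1)) = (\<Sum>j\<in>{1..k}. c j * vc_vec (J j) i)"
      by (rule sum.cong) (auto simp: coords_def)
    finally show "vc_vec L i = (\<Sum>j\<in>{1..k}. c j * vc_vec (J j) i)"
      by (simp add: L_iff)
  next
    assume coordinates: "vc_vec L i = (\<Sum>j\<in>{1..k}. c j * vc_vec (J j) i)"
    show "\<forall>as. length as = k \<longrightarrow> (\<forall>j\<in>{1..k}. Inl i \<in> J j (as ! (j - 1))) \<longrightarrow>
            Inl i \<in> L (\<Sum>j\<in>{1..k}. c j * as ! (j - 1))"
    proof (intro allI impI)
      fix as :: "'a list"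
      assume "\<forall>j\<in>{1..k}. Inl i \<in> J j (as ! (j - 1))"
      then have "as ! (j - 1) = vc_vec (J j) i" if "j \<in> {1..k}" for j
        using J_iff that by simp
      then show "Inl i \<in> L (\<Sum>j\<in>{1..k}. c j * as ! (j - 1))"
        by (simp add: L_iff coordinates)
    qed
  qed
qed

lemma sat_LinCom_iff_in_span:
  assumes L: "virtual_column m L" and J: "\<forall>j\<in>{1..k}. virtual_column m (J j)"
    and \<sigma>L: "\<forall>\<alpha>. \<sigma> (0, \<alpha>) = L \<alpha>" and \<sigma>J: "\<forall>j\<in>{1..k}. \<forall>\<alpha>. \<sigma> (j, \<alpha>) = J j \<alpha>"
  shows "sat (matrix_struct m n A) \<nu> \<sigma> (LinCom k) \<longleftrightarrow> in_span m (vc_vec L) k (\<lambda>j. vc_vec (J j))"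
proof -
  have "sat (matrix_struct m n A) \<nu> \<sigma> (combination_formula k cs) \<longleftrightarrow>
          (\<forall>i<m. vc_vec L i = (\<Sum>j\<in>{1..k}. cs ! (j - 1) * vc_vec (J j) i))" for cs
    using row_condition_iff_coordinates[OF L J, of _ "\<lambda>j. cs ! (j - 1)"] \<sigma>L \<sigma>J
    by (simp add: sat_combination_formula_matrix_struct cong: conj_cong)
  then show ?thesis
    by (auto simp: LinCom_def set_n_lists in_span_iff_coefficient_list)
qed

theorem lemma8:
  fixes k :: nat
  shows "\<exists>\<phi> :: ('f::{finite,field}, nat \<times> 'f) cmso.
    \<forall>m n (A :: nat \<Rightarrow> nat \<Rightarrow> 'f) (L :: 'f \<Rightarrow> (nat + nat) set) (J :: nat \<Rightarrow> 'f \<Rightarrow> (nat + nat) set)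
       (\<nu> :: nat \<Rightarrow> nat + nat) (\<sigma> :: nat \<times> 'f \<Rightarrow> (nat + nat) set).
      virtual_column m L \<longrightarrow> (\<forall>j\<in>{1..k}. virtual_column m (J j)) \<longrightarrow>
      (\<forall>x. \<nu> x \<in> univ (matrix_struct m n A)) \<longrightarrow>
      (\<forall>X. \<sigma> X \<subseteq> univ (matrix_struct m n A)) \<longrightarrow>
      (\<forall>\<alpha>. \<sigma> (0, \<alpha>) = L \<alpha>) \<longrightarrow>
      (\<forall>j\<in>{1..k}. \<forall>\<alpha>. \<sigma> (j, \<alpha>) = J j \<alpha>) \<longrightarrow>
      (sat (matrix_struct m n A) \<nu> \<sigma> \<phi> \<longleftrightarrow>
       in_span m (vc_vec L) k (\<lambda>j. vc_vec (J j)))"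
  using sat_LinCom_iff_in_span by (intro exI[of _ "LinCom k"] allI impI) blast

end
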